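(* Let $\mathbf A=\bigoplus_{i\in I}\mathbf H_i$ be a BL-chain represented as an ordinal sum of totally ordered Wajsberg hoops, and let $\{a_x\}_{x\in X}$ be a family of elements of $A$. (1) If $\inf_x a_x$ and $\inf_x a_x^2$ exist and $(\inf_x a_x)^2=\inf_x a_x^2$, then $\{a_x\}_{x\in X}$ is $\wedge$-connected or $\inf_x a_x$ is idempotent. (2) If $\sup_x a_x$ exists, then $\{a_x\}_{x\in X}$ is $\vee$-connected or $\sup_x a_x$ is idempotent.
   Context: A BL-algebra is an algebra $(A,\cdot,\to,\wedge,\vee,0,1)$ such that $(A,\wedge,\vee,0,1)$ is a bounded lattice, $(A,\cdot,1)$ is a commutative monoid, $x\cdot y\le z$ iff $x\le y\to z$, $x\wedge y=x\cdot(x\to y)$ and $(x\to y)\vee(y\to x)=1$; a BL-chain is a totally ordered BL-algebra; $a^2=a\cdot a$, and $a$ is idempotent if $a^2=a$. A hoop is an algebra $(H,\cdot,\to,1)$ such that $(H,\cdot,1)$ is a commutative monoid and $x\to x=1$, $x\cdot(x\to y)=y\cdot(y\to x)$, $x\to(y\to z)=(x\cdot y)\to z$; a Wajsberg hoop additionally satisfies $(x\to y)\to y=(y\to x)\to x$. Given a totally ordered index set $I$ and hoops $\mathbf H_i$ with $H_i\cap H_j=\{1\}$ for $i\ne j$, the ordinal sum $\bigoplus_{i\in I}\mathbf H_i$ has universe $\bigcup_iH_i$ with: $x\to y=x\to^{\mathbf H_i}y$ if $x,y\in H_i$; $x\to y=y$ if $x\in H_i,y\in H_j,i>j$; $x\to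 y=1$ if $x\in H_i\setminus\{1\},y\in H_j,i<j$; $x\cdot y=x\cdot^{\mathbf H_i}y$ if $x,y\in H_i$; $x\cdot y=y$ if $x\in H_i,y\in H_j\setminus\{1\},i>j$; $x\cdot y=x$ if $x\in H_i\setminus\{1\},y\in H_j,i<j$. For $C\subseteq A$ with $\bigwedge C$ existing, $C$ is $\wedge$-connected if there are $i\in I$ and $c\in C$ with $\bigwedge C\in H_i$ and $c\in H_i$; dually, for $\bigvee C$ existing, $C$ is $\vee$-connected if there are $i\in I$ and $c\in C$ with $\bigvee C\in H_i$ and $c\in H_i$. *)

theory Defs
  imports Main
begin

definition bl_le :: "('a \<Rightarrow> 'a \<Rightarrow> 'a) \<Rightarrow> 'a \<Rightarrow> 'a \<Rightarrow> bool" where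
  "bl_le meet x y \<longleftrightarrow> meet x y = x"

definition BL_algebra ::
  "'a set \<Rightarrow> ('a \<Rightarrow> 'a \<Rightarrow> 'a) \<Rightarrow> ('a \<Rightarrow> 'a \<Rightarrow> 'a) \<Rightarrow> ('a \<Rightarrow> 'a \<Rightarrow> 'a)
    \<Rightarrow> ('a \<Rightarrow> 'a \<Rightarrow> 'a) \<Rightarrow> 'a \<Rightarrow> 'a \<Rightarrow> bool" where
  "BL_algebra A mult imp meet join zero one \<longleftrightarrow>
     zero \<in> A \<and> one \<in> A \<and>
     (\<forall>x\<in>A. \<forall>y\<in>A. mult x y \<in> A \<and> imp x y \<in> A \<and> meet x y \<in> A \<and> join x y \<in> A) \<and>
     \<comment> \<open>bounded lattice\<close>
     (\<forall>x\<in>A. \<forall>y\<in>A. \<forall>z\<in>A. meet (meet x y) z = meet x (meet y z) \<and> join (join x y) z = join x (join y z)) \<and>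
     (\<forall>x\<in>A. \<forall>y\<in>A. meet x y = meet y x \<and> join x y = join y x) \<and>
     (\<forall>x\<in>A. \<forall>y\<in>A. meet x (join x y) = x \<and> join x (meet x y) = x) \<and>
     (\<forall>x\<in>A. meet zero x = zero \<and> meet x one = x) \<and>
     \<comment> \<open>commutative monoid\<close>
     (\<forall>x\<in>A. \<forall>y\<in>A. \<forall>z\<in>A. mult (mult x y) z = mult x (mult y z)) \<and>
     (\<forall>x\<in>A. \<forall>y\<in>A. mult x y = mult y x) \<and>
     (\<forall>x\<in>A. mult x one = x) \<and>
     \<comment> \<open>residuation\<close>
     (\<forall>x\<in>A. \<forall>y\<in>A. \<forall>z\<in>A. bl_le meet (mult x y) z \<longleftrightarrow> bl_le meet x (imp y z)) \<and>
     \<comment> \<open>divisibility and prelinearity\<close>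
     (\<forall>x\<in>A. \<forall>y\<in>A. meet x y = mult x (imp x y)) \<and>
     (\<forall>x\<in>A. \<forall>y\<in>A. join (imp x y) (imp y x) = one)"

definition BL_chain ::
  "'a set \<Rightarrow> ('a \<Rightarrow> 'a \<Rightarrow> 'a) \<Rightarrow> ('a \<Rightarrow> 'a \<Rightarrow> 'a) \<Rightarrow> ('a \<Rightarrow> 'a \<Rightarrow> 'a)
    \<Rightarrow> ('a \<Rightarrow> 'a \<Rightarrow> 'a) \<Rightarrow> 'a \<Rightarrow> 'a \<Rightarrow> bool" where
  "BL_chain A mult imp meet join zero one \<longleftrightarrow>
     BL_algebra A mult imp meet join zero one \<and>
     (\<forall>x\<in>A. \<forall>y\<in>A. bl_le meet x y \<or> bl_le meet y x)"

definition hoop :: "'a set \<Rightarrow> ('a \<Rightarrow> 'a \<Rightarrow> 'a) \<Rightarrow> ('a \<Rightarrow> 'a \<Rightarrow> 'a) \<Rightarrow> 'a \<Rightarrow> bool" where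
  "hoop H mult imp one \<longleftrightarrow>
     one \<in> H \<and>
     (\<forall>x\<in>H. \<forall>y\<in>H. mult x y \<in> H \<and> imp x y \<in> H) \<and>
     (\<forall>x\<in>H. \<forall>y\<in>H. \<forall>z\<in>H. mult (mult x y) z = mult x (mult y z)) \<and>
     (\<forall>x\<in>H. \<forall>y\<in>H. mult x y = mult y x) \<and>
     (\<forall>x\<in>H. mult x one = x) \<and>
     (\<forall>x\<in>H. imp x x = one) \<and>
     (\<forall>x\<in>H. \<forall>y\<in>H. mult x (imp x y) = mult y (imp y x)) \<and>
     (\<forall>x\<in>H. \<forall>y\<in>H. \<forall>z\<in>H. imp x (imp y z) = imp (mult x y) z)"

definition wajsberg_hoop :: "'a set \<Rightarrow> ('a \<Rightarrow> 'a \<Rightarrow> 'a) \<Rightarrow> ('a \<Rightarrow> 'a \<Rightarrow> 'a) \<Rightarrow> 'a \<Rightarrow> bool" where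
  "wajsberg_hoop H mult imp one \<longleftrightarrow>
     hoop H mult imp one \<and>
     (\<forall>x\<in>H. \<forall>y\<in>H. imp (imp x y) y = imp (imp y x) x)"

text \<open>Hoop order: x \<le> y iff x \<rightarrow> y = 1; totally ordered means this order is total.\<close>
definition totally_ordered_wajsberg_hoop ::
  "'a set \<Rightarrow> ('a \<Rightarrow> 'a \<Rightarrow> 'a) \<Rightarrow> ('a \<Rightarrow> 'a \<Rightarrow> 'a) \<Rightarrow> 'a \<Rightarrow> bool" where
  "totally_ordered_wajsberg_hoop H mult imp one \<longleftrightarrow>
     wajsberg_hoop H mult imp one \<and>
     (\<forall>x\<in>H. \<forall>y\<in>H. imp x y = one \<or> imp y x = one)"

text \<open>The operations of each component H i are those of A restricted to H i.\<close>
definition ordinal_sum_rep ::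
  "'a set \<Rightarrow> ('a \<Rightarrow> 'a \<Rightarrow> 'a) \<Rightarrow> ('a \<Rightarrow> 'a \<Rightarrow> 'a) \<Rightarrow> 'a \<Rightarrow> ('i::linorder) set \<Rightarrow> ('i \<Rightarrow> 'a set) \<Rightarrow> bool" where
  "ordinal_sum_rep A mult imp one I H \<longleftrightarrow>
     A = (\<Union>i\<in>I. H i) \<and>
     (\<forall>i\<in>I. totally_ordered_wajsberg_hoop (H i) mult imp one) \<and>
     (\<forall>i\<in>I. \<forall>j\<in>I. i \<noteq> j \<longrightarrow> H i \<inter> H j = {one}) \<and>
     (\<forall>i\<in>I. \<forall>j\<in>I. \<forall>x\<in>H i. \<forall>y\<in>H j. i > j \<longrightarrow> imp x y = y) \<and>
     (\<forall>i\<in>I. \<forall>j\<in>I. \<forall>x\<in>H i. \<forall>y\<in>H j. i < j \<longrightarrow> x \<noteq> one \<longrightarrow> imp x y = one) \<and>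
     (\<forall>i\<in>I. \<forall>j\<in>I. \<forall>x\<in>H i. \<forall>y\<in>H j. i > j \<longrightarrow> y \<noteq> one \<longrightarrow> mult x y = y) \<and>
     (\<forall>i\<in>I. \<forall>j\<in>I. \<forall>x\<in>H i. \<forall>y\<in>H j. i < j \<longrightarrow> x \<noteq> one \<longrightarrow> mult x y = x)"

definition is_infimum :: "'a set \<Rightarrow> ('a \<Rightarrow> 'a \<Rightarrow> 'a) \<Rightarrow> 'a set \<Rightarrow> 'a \<Rightarrow> bool" where
  "is_infimum A meet S m \<longleftrightarrow> m \<in> A \<and> (\<forall>s\<in>S. bl_le meet m s) \<and>
     (\<forall>y\<in>A. (\<forall>s\<in>S. bl_le meet y s) \<longrightarrow> bl_le meet y m)"

definition is_supremum :: "'a set \<Rightarrow> ('a \<Rightarrow> 'a \<Rightarrow> 'a) \<Rightarrow> 'a set \<Rightarrow> 'a \<Rightarrow> bool" where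
  "is_supremum A meet S m \<longleftrightarrow> m \<in> A \<and> (\<forall>s\<in>S. bl_le meet s m) \<and>
     (\<forall>y\<in>A. (\<forall>s\<in>S. bl_le meet s y) \<longrightarrow> bl_le meet m y)"

definition meet_connected :: "'i set \<Rightarrow> ('i \<Rightarrow> 'a set) \<Rightarrow> 'a set \<Rightarrow> 'a \<Rightarrow> bool" where
  "meet_connected I H C m \<longleftrightarrow> (\<exists>i\<in>I. \<exists>c\<in>C. m \<in> H i \<and> c \<in> H i)"

definition join_connected :: "'i set \<Rightarrow> ('i \<Rightarrow> 'a set) \<Rightarrow> 'a set \<Rightarrow> 'a \<Rightarrow> bool" where
  "join_connected I H C s \<longleftrightarrow> (\<exists>i\<in>I. \<exists>c\<in>C. s \<in> H i \<and> c \<in> H i)"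

end

theory Submission
  imports Defs
begin

text \<open>In an ordinal sum every element different from 1 lies below everything in a higher
  component. So if an infimum m different from 1 shares no component with the family, every
  a x lies in a component strictly above that of m, hence so does its square; thus m is a
  lower bound of the squares and m \<le> inf (a x)^2 = m^2 \<le> m. Dually, a supremum s different
  from 1 sharing no component with the family lies in a component strictly above every a x,
  hence so does s^2, and s \<le> s^2 \<le> s.\<close>

locale BL_alg =
  fixes A :: "'a set" and mult imp meet join :: "'a \<Rightarrow> 'a \<Rightarrow> 'a" and zero one :: 'a
  assumes BL: "BL_algebra A mult imp meet join zero one"
begin

abbreviation le :: "'a \<Rightarrow> 'a \<Rightarrow> bool" (infix "\<preceq>" 50)
  where "x \<preceq> y \<equiv> bl_le meet x y"

lemma one_closed: "one \<in> A"
  and mult_closed: "x \<in> A \<Longrightarrow> y \<in> A \<Longrightarrow> mult x y \<in> A"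
  and imp_closed: "x \<in> A \<Longrightarrow> y \<in> A \<Longrightarrow> imp x y \<in> A"
  and meet_closed: "x \<in> A \<Longrightarrow> y \<in> A \<Longrightarrow> meet x y \<in> A"
  and meet_commute: "x \<in> A \<Longrightarrow> y \<in> A \<Longrightarrow> meet x y = meet y x"
  and meet_absorb: "x \<in> A \<Longrightarrow> y \<in> A \<Longrightarrow> meet x (join x y) = x"
  and join_absorb: "x \<in> A \<Longrightarrow> y \<in> A \<Longrightarrow> join x (meet x y) = x"
  and meet_one: "x \<in> A \<Longrightarrow> meet x one = x"
  and mult_commute: "x \<in> A \<Longrightarrow> y \<in> A \<Longrightarrow> mult x y = mult y x"
  and mult_one: "x \<in> A \<Longrightarrow> mult x one = x"
  and residuation: "x \<in> A \<Longrightarrow> y \<in> A \<Longrightarrow> z \<in> A \<Longrightarrow> mult x y \<preceq> z \<longleftrightarrow> x \<preceq> imp y z"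
  by (insert BL, unfold BL_algebra_def, (elim conjE, blast)+)

lemma le_refl: "x \<in> A \<Longrightarrow> x \<preceq> x"
  using meet_absorb[of x "meet x x"] join_absorb[of x x] meet_closed[of x x]
  by (simp add: bl_le_def)

lemma le_one: "x \<in> A \<Longrightarrow> x \<preceq> one"
  by (simp add: bl_le_def meet_one)

lemma le_antisym: "x \<in> A \<Longrightarrow> y \<in> A \<Longrightarrow> x \<preceq> y \<Longrightarrow> y \<preceq> x \<Longrightarrow> x = y"
  by (metis bl_le_def meet_commute)

lemma one_le_iff: "z \<in> A \<Longrightarrow> one \<preceq> z \<longleftrightarrow> z = one"
  using meet_commute[OF one_closed] by (simp add: bl_le_def meet_one)

lemma le_iff_imp_eq_one: "x \<in> A \<Longrightarrow> y \<in> A \<Longrightarrow> x \<preceq> y \<longleftrightarrow> imp x y = one"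
  using residuation[OF one_closed, of x y] mult_commute[OF one_closed, of x]
  by (simp add: mult_one one_le_iff imp_closed)

lemma mult_le_right: "x \<in> A \<Longrightarrow> y \<in> A \<Longrightarrow> mult x y \<preceq> y"
  using residuation[of x y y] le_iff_imp_eq_one[of y y]
  by (simp add: le_refl le_one)

lemma square_idempotent_if_le_square: "x \<in> A \<Longrightarrow> x \<preceq> mult x x \<Longrightarrow> mult x x = x"
  by (simp add: le_antisym mult_closed mult_le_right)

end

locale BL_ordinal_sum = BL_alg +
  fixes I :: "'i::linorder set" and H :: "'i \<Rightarrow> 'a set"
  assumes rep: "ordinal_sum_rep A mult imp one I H"
begin

lemma carrier_eq: "A = (\<Union>i\<in>I. H i)"
  and imp_lower_component:
    "i \<in> I \<Longrightarrow> j \<in> I \<Longrightarrow> x \<in> H i \<Longrightarrow> y \<in> H j \<Longrightarrow> i < j \<Longrightarrow> x \<noteq> one \<Longrightarrow> imp x y = one"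
  by (insert rep, unfold ordinal_sum_rep_def, (elim conjE, blast)+)

lemma component_hoop: "i \<in> I \<Longrightarrow> hoop (H i) mult imp one"
  using rep
  by (simp add: ordinal_sum_rep_def totally_ordered_wajsberg_hoop_def wajsberg_hoop_def)

lemma one_in_component: "i \<in> I \<Longrightarrow> one \<in> H i"
  using component_hoop by (simp add: hoop_def)

lemma mult_in_component: "i \<in> I \<Longrightarrow> x \<in> H i \<Longrightarrow> y \<in> H i \<Longrightarrow> mult x y \<in> H i"
  using component_hoop by (simp add: hoop_def)

lemma component_subset: "i \<in> I \<Longrightarrow> H i \<subseteq> A"
  using carrier_eq by blast

lemma le_of_lower_component:
  assumes "i \<in> I" "j \<in> I" "x \<in> H i" "y \<in> H j" "i < j" "x \<noteq> one"
  shows "x \<preceq> y"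
proof -
  have "x \<in> A" "y \<in> A" using assms component_subset by blast+
  then show ?thesis using assms by (simp add: le_iff_imp_eq_one imp_lower_component)
qed

lemma component_less_if_le:
  assumes "i \<in> I" "j \<in> I" "x \<in> H i" "y \<in> H j" "i \<noteq> j" "y \<noteq> one" "x \<noteq> y"
    and "x \<preceq> y"
  shows "i < j"
proof (rule ccontr)
  assume "\<not> i < j"
  with \<open>i \<noteq> j\<close> have "y \<preceq> x"
    using assms le_of_lower_component[of j i y x] by simp
  moreover have "x \<in> A" "y \<in> A" using assms component_subset by blast+
  ultimately have "x = y" using \<open>x \<preceq> y\<close> le_antisym by blast
  with \<open>x \<noteq> y\<close> show False ..
qed

lemma infimum_idempotent_if_disconnected:
  assumes "a ` X \<subseteq> A"
    and inf: "is_infimum A meet (a ` X) m"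
    and inf_sq: "is_infimum A meet ((\<lambda>x. mult (a x) (a x)) ` X) (mult m m)"
    and disconnected: "\<not> meet_connected I H (a ` X) m"
  shows "mult m m = m"
proof -
  have "m \<in> A" using inf by (simp add: is_infimum_def)
  then obtain i where i: "i \<in> I" "m \<in> H i" using carrier_eq by blast
  show ?thesis
  proof (cases "m = one")
    case True
    then show ?thesis using mult_one one_closed by simp
  next
    case False
    have "m \<preceq> mult (a x) (a x)" if "x \<in> X" for x
    proof -
      obtain j where j: "j \<in> I" "a x \<in> H j"
        using \<open>x \<in> X\<close> \<open>a ` X \<subseteq> A\<close> carrier_eq by blast
      have "a x \<notin> H i" using disconnected i \<open>x \<in> X\<close> unfolding meet_connected_def by blast
      then have "a x \<noteq> one" "a x \<noteq> m" "i \<noteq> j" using i j one_in_component by auto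
      moreover have "m \<preceq> a x" using inf \<open>x \<in> X\<close> by (simp add: is_infimum_def)
      ultimately have "i < j" using component_less_if_le i j by blast
      moreover have "mult (a x) (a x) \<in> H j" using j mult_in_component by blast
      ultimately show ?thesis using le_of_lower_component i j \<open>m \<noteq> one\<close> by blast
    qed
    then have "m \<preceq> mult m m" using inf_sq \<open>m \<in> A\<close> unfolding is_infimum_def by blast
    then show ?thesis using square_idempotent_if_le_square \<open>m \<in> A\<close> by blast
  qed
qed

lemma supremum_idempotent_if_disconnected:
  assumes "a ` X \<subseteq> A"
    and sup: "is_supremum A meet (a ` X) s"
    and disconnected: "\<not> join_connected I H (a ` X) s"
  shows "mult s s = s"
proof -
  have "s \<in> A" using sup by (simp add: is_supremum_def)
  then obtain i where i: "i \<in> I" "s \<in> H i" using carrier_eq by blast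
  show ?thesis
  proof (cases "s = one")
    case True
    then show ?thesis using mult_one one_closed by simp
  next
    case False
    have "a x \<preceq> mult s s" if "x \<in> X" for x
    proof -
      obtain j where j: "j \<in> I" "a x \<in> H j"
        using \<open>x \<in> X\<close> \<open>a ` X \<subseteq> A\<close> carrier_eq by blast
      have "a x \<notin> H i" using disconnected i \<open>x \<in> X\<close> unfolding join_connected_def by blast
      then have "a x \<noteq> one" "a x \<noteq> s" "j \<noteq> i" using i j one_in_component by auto
      moreover have "a x \<preceq> s" using sup \<open>x \<in> X\<close> by (simp add: is_supremum_def)
      ultimately have "j < i" using component_less_if_le i j \<open>s \<noteq> one\<close> by blast
      moreover have "mult s s \<in> H i" using i mult_in_component by blast
      ultimately show ?thesis using le_of_lower_component i j \<open>a x \<noteq> one\<close> by blast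
    qed
    then have "s \<preceq> mult s s" using sup mult_closed \<open>s \<in> A\<close> unfolding is_supremum_def by blast
    then show ?thesis using square_idempotent_if_le_square \<open>s \<in> A\<close> by blast
  qed
qed

end

theorem mainTheorem11:
  fixes A :: "'a set" and mult imp meet join :: "'a \<Rightarrow> 'a \<Rightarrow> 'a" and zero one :: 'a
    and I :: "('i::linorder) set" and H :: "'i \<Rightarrow> 'a set"
    and X :: "'x set" and a :: "'x \<Rightarrow> 'a"
  assumes "BL_chain A mult imp meet join zero one"
    and "ordinal_sum_rep A mult imp one I H"
    and "a ` X \<subseteq> A"
  shows "(\<forall>m m2. is_infimum A meet (a ` X) m
             \<and> is_infimum A meet ((\<lambda>x. mult (a x) (a x)) ` X) m2
             \<and> mult m m = m2
           \<longrightarrow> meet_connected I H (a ` X) m \<or> mult m m = m)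
       \<and> (\<forall>s. is_supremum A meet (a ` X) s
           \<longrightarrow> join_connected I H (a ` X) s \<or> mult s s = s)"
proof -
  interpret BL_ordinal_sum A mult imp meet join zero one I H
    using assms(1,2) by unfold_locales (simp_all add: BL_chain_def)
  show ?thesis
    using infimum_idempotent_if_disconnected supremum_idempotent_if_disconnected assms(3)
    by blast
qed

end
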